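(* Let $G$ be a finite abelian group (written additively) and fix $\omega \in G$. Consider the Frobenius object in $\mathbf{Rel}$ with underlying set $X = G$, unit $\eta = \{0\}$, multiplication $\tilde{\mu}(x,y) = \{x+y\}$ for $x,y \in G$, and counit $\varepsilon = \{\omega\}$. Then for every integer $g \ge 0$ its partition function satisfies $$Z(\Sigma_g) = \begin{cases} T & \text{if } (g-1)\omega = 0,\\ F & \text{otherwise.}\end{cases}$$
   Context: $\mathbf{Rel}$ is the symmetric monoidal category whose objects are sets, whose morphisms $X \to Y$ are relations $R \subseteq X \times Y$, composed by $S\circ R = \{(x,z) : \exists y,\ (x,y)\in R,\ (y,z)\in S\}$, with identity the diagonal, monoidal product the Cartesian product, and unit the one-point set $\{\bullet\}$. A relation $R \subseteq X\times Y$ is identified with the map $\tilde R: X \to \mathcal{P}(Y)$, $\tilde R(x) = \{y : (x,y)\in R\}$. A Frobenius object in $\mathbf{Rel}$ is a set $X$ with a unit $\eta \subseteq X$ (a relation $\{\bullet\}\to X$), a counit $\varepsilon \subseteq X$ (a relation $X \to \{\bullet\}$), and a multiplication $\mu \subseteq X\times X\times X$ (a relation $X\times X \to X$, with map $\tilde\mu: X\times X\to\mathcal{P}(X)$) satisfying unitality $\mu\circ(\mathbf{1}\times\eta)=\mu\circ(\eta\times\mathbf{1})=\mathbf{1}$, associativity $\mu\circ(\mathbf{1}\times\mu)=\mu\circ(\mu\times\mathbf{1})$, and nondegeneracy: there is a relation $\beta:\{\bullet\}\to X\times X$ with $(\varepsilon\times\mathbf{1})\circ(\mu\times\mathbf{1})\circ(\mathbf{1}\times\beta)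 = (\mathbf{1}\times\varepsilon)\circ(\mathbf{1}\times\mu)\circ(\beta\times\mathbf{1}) = \mathbf{1}$ (such $\beta$ is unique). The comultiplication is $\delta = (\mathbf{1}\times\mu)\circ(\beta\times\mathbf{1}): X \to X\times X$. It is commutative if $\tilde\mu(x,y)=\tilde\mu(y,x)$ for all $x,y$. For a commutative Frobenius object, the partition function on the closed orientable surface $\Sigma_g$ of genus $g\ge 0$ is $Z(\Sigma_g) = \varepsilon\circ(\mu\circ\delta)^g\circ\eta \in \mathrm{Hom}_{\mathbf{Rel}}(\{\bullet\},\{\bullet\}) = \{\emptyset,\{\bullet\}\}$, where $\emptyset$ is identified with $F$ (false) and $\{\bullet\}$ with $T$ (true). *)

theory Defs
  imports Main
begin

text \<open>The category Rel: objects are types (sets = UNIV of a type), a morphism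
  X \<rightarrow> Y is a relation of type ('x \<times> 'y) set, the unit object is the type unit.\<close>

definition rcomp :: "('b \<times> 'c) set \<Rightarrow> ('a \<times> 'b) set \<Rightarrow> ('a \<times> 'c) set" (infixl "\<circ>\<^sub>R" 55) where
  "S \<circ>\<^sub>R R = {(x, z). \<exists>y. (x, y) \<in> R \<and> (y, z) \<in> S}"

definition rtens :: "('a \<times> 'c) set \<Rightarrow> ('b \<times> 'd) set \<Rightarrow> (('a \<times> 'b) \<times> ('c \<times> 'd)) set" (infixr "\<otimes>\<^sub>R" 60) where
  "R \<otimes>\<^sub>R S = {((a, b), (c, d)). (a, c) \<in> R \<and> (b, d) \<in> S}"

definition ridt :: "('a \<times> 'a) set" where "ridt = Id"

definition assoc_R :: "((('a \<times> 'b) \<times> 'c) \<times> ('a \<times> ('b \<times> 'c))) set" where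
  "assoc_R = {(((x, y), z), (x, (y, z))) | x y z. True}"
definition assoc_inv_R :: "(('a \<times> ('b \<times> 'c)) \<times> (('a \<times> 'b) \<times> 'c)) set" where
  "assoc_inv_R = {((x, (y, z)), ((x, y), z)) | x y z. True}"
definition lunit_R :: "((unit \<times> 'a) \<times> 'a) set" where
  "lunit_R = {(((), x), x) | x. True}"
definition lunit_inv_R :: "('a \<times> (unit \<times> 'a)) set" where
  "lunit_inv_R = {(x, ((), x)) | x. True}"
definition runit_R :: "(('a \<times> unit) \<times> 'a) set" where
  "runit_R = {((x, ()), x) | x. True}"
definition runit_inv_R :: "('a \<times> ('a \<times> unit)) set" where
  "runit_inv_R = {(x, (x, ())) | x. True}"

text \<open>Nondegeneracy: \<beta> : I \<rightarrow> X \<times> X satisfies the two snake equations.\<close>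
definition nondeg_witness ::
  "('a \<times> unit) set \<Rightarrow> (('a \<times> 'a) \<times> 'a) set \<Rightarrow> (unit \<times> ('a \<times> 'a)) set \<Rightarrow> bool" where
  "nondeg_witness \<epsilon> \<mu> \<beta> \<longleftrightarrow>
     lunit_R \<circ>\<^sub>R (\<epsilon> \<otimes>\<^sub>R ridt) \<circ>\<^sub>R (\<mu> \<otimes>\<^sub>R ridt) \<circ>\<^sub>R assoc_inv_R \<circ>\<^sub>R (ridt \<otimes>\<^sub>R \<beta>) \<circ>\<^sub>R runit_inv_R = ridt
   \<and> runit_R \<circ>\<^sub>R (ridt \<otimes>\<^sub>R \<epsilon>) \<circ>\<^sub>R (ridt \<otimes>\<^sub>R \<mu>) \<circ>\<^sub>R assoc_R \<circ>\<^sub>R (\<beta> \<otimes>\<^sub>R ridt) \<circ>\<^sub>R lunit_inv_R = ridt"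

definition frobenius_rel ::
  "(unit \<times> 'a) set \<Rightarrow> ('a \<times> unit) set \<Rightarrow> (('a \<times> 'a) \<times> 'a) set \<Rightarrow> bool" where
  "frobenius_rel \<eta> \<epsilon> \<mu> \<longleftrightarrow>
     \<mu> \<circ>\<^sub>R (ridt \<otimes>\<^sub>R \<eta>) \<circ>\<^sub>R runit_inv_R = ridt
   \<and> \<mu> \<circ>\<^sub>R (\<eta> \<otimes>\<^sub>R ridt) \<circ>\<^sub>R lunit_inv_R = ridt
   \<and> \<mu> \<circ>\<^sub>R (ridt \<otimes>\<^sub>R \<mu>) \<circ>\<^sub>R assoc_R = \<mu> \<circ>\<^sub>R (\<mu> \<otimes>\<^sub>R ridt)
   \<and> (\<exists>\<beta>. nondeg_witness \<epsilon> \<mu> \<beta>)"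

definition commutative_rel :: "(('a \<times> 'a) \<times> 'a) set \<Rightarrow> bool" where
  "commutative_rel \<mu> \<longleftrightarrow> (\<forall>x y z. ((x, y), z) \<in> \<mu> \<longleftrightarrow> ((y, x), z) \<in> \<mu>)"

definition copairing :: "('a \<times> unit) set \<Rightarrow> (('a \<times> 'a) \<times> 'a) set \<Rightarrow> (unit \<times> ('a \<times> 'a)) set" where
  "copairing \<epsilon> \<mu> = (THE \<beta>. nondeg_witness \<epsilon> \<mu> \<beta>)"

definition comult :: "('a \<times> unit) set \<Rightarrow> (('a \<times> 'a) \<times> 'a) set \<Rightarrow> ('a \<times> ('a \<times> 'a)) set" where
  "comult \<epsilon> \<mu> = (ridt \<otimes>\<^sub>R \<mu>) \<circ>\<^sub>R assoc_R \<circ>\<^sub>R (copairing \<epsilon> \<mu> \<otimes>\<^sub>R ridt) \<circ>\<^sub>R lunit_inv_R"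

text \<open>Partition function Z(\<Sigma>_g) = \<epsilon> \<circ> (\<mu> \<circ> \<delta>)^g \<circ> \<eta>; True iff it is {\<bullet>}.\<close>
definition partition_fn ::
  "(unit \<times> 'a) set \<Rightarrow> ('a \<times> unit) set \<Rightarrow> (('a \<times> 'a) \<times> 'a) set \<Rightarrow> nat \<Rightarrow> bool" where
  "partition_fn \<eta> \<epsilon> \<mu> g \<longleftrightarrow>
     ((), ()) \<in> \<epsilon> \<circ>\<^sub>R ((\<mu> \<circ>\<^sub>R comult \<epsilon> \<mu>) ^^ g) \<circ>\<^sub>R \<eta>"

definition int_smul :: "int \<Rightarrow> 'a::ab_group_add \<Rightarrow> 'a" where
  "int_smul k x = (if 0 \<le> k then (\<Sum>i<nat k. x) else - (\<Sum>i<nat (- k). x))"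

end

theory Submission
  imports Defs
begin

text \<open>The nondegeneracy equations force the copairing to be \<open>\<beta> = {(a, b) | a + b = \<omega>}\<close>, so the
  comultiplication is \<open>\<delta>(x) = {(a, c) | a + c = x + \<omega>}\<close> and the handle operator \<open>\<mu> \<circ> \<delta>\<close> is
  translation by \<omega>. Hence \<open>Z(\<Sigma>\<^sub>g) = \<epsilon> \<circ> (translation by g\<omega>) \<circ> \<eta>\<close> holds iff \<open>g\<omega> = \<omega>\<close>.\<close>

definition add_rel :: "(('a::plus \<times> 'a) \<times> 'a) set" where
  "add_rel = {((x, y), x + y) | x y. True}"

definition translation_rel :: "'a::plus \<Rightarrow> ('a \<times> 'a) set" where
  "translation_rel c = {(x, x + c) | x. True}"

lemma commutative_rel_add_rel: "commutative_rel (add_rel :: (('a::ab_semigroup_add \<times> 'a) \<times> 'a) set)"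
  unfolding commutative_rel_def add_rel_def by (auto simp: add.commute)

lemma add_rel_unit_laws:
  "add_rel \<circ>\<^sub>R (ridt \<otimes>\<^sub>R {((), 0 :: 'a::monoid_add)}) \<circ>\<^sub>R runit_inv_R = ridt"
  "add_rel \<circ>\<^sub>R ({((), 0 :: 'a::monoid_add)} \<otimes>\<^sub>R ridt) \<circ>\<^sub>R lunit_inv_R = ridt"
  unfolding add_rel_def rcomp_def rtens_def ridt_def runit_inv_R_def lunit_inv_R_def by auto

lemma add_rel_assoc:
  "add_rel \<circ>\<^sub>R (ridt \<otimes>\<^sub>R add_rel) \<circ>\<^sub>R assoc_R
     = add_rel \<circ>\<^sub>R (add_rel \<otimes>\<^sub>R (ridt :: ('a::semigroup_add \<times> 'a) set))"
  unfolding add_rel_def rcomp_def rtens_def ridt_def assoc_R_def by (auto simp: add.assoc)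

lemma nondeg_witness_add_rel_iff:
  fixes \<omega> :: "'a::ab_group_add"
  shows "nondeg_witness {(\<omega>, ())} add_rel \<beta> \<longleftrightarrow> \<beta> = {((), (a, b)) | a b. a + b = \<omega>}"
proof -
  have left_snake: "lunit_R \<circ>\<^sub>R ({(\<omega>, ())} \<otimes>\<^sub>R ridt) \<circ>\<^sub>R (add_rel \<otimes>\<^sub>R ridt) \<circ>\<^sub>R assoc_inv_R
      \<circ>\<^sub>R (ridt \<otimes>\<^sub>R \<beta>) \<circ>\<^sub>R runit_inv_R = {(x, y). ((), (\<omega> - x, y)) \<in> \<beta>}"
    unfolding add_rel_def rcomp_def rtens_def ridt_def lunit_R_def assoc_inv_R_def runit_inv_R_def
    by (auto simp: algebra_simps)
  have right_snake: "runit_R \<circ>\<^sub>R (ridt \<otimes>\<^sub>R {(\<omega>, ())}) \<circ>\<^sub>R (ridt \<otimes>\<^sub>R add_rel) \<circ>\<^sub>R assoc_R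
      \<circ>\<^sub>R (\<beta> \<otimes>\<^sub>R ridt) \<circ>\<^sub>R lunit_inv_R = {(x, y). ((), (y, \<omega> - x)) \<in> \<beta>}"
    unfolding add_rel_def rcomp_def rtens_def ridt_def runit_R_def assoc_R_def lunit_inv_R_def
    by (auto simp: algebra_simps)
  have "nondeg_witness {(\<omega>, ())} add_rel \<beta> \<longleftrightarrow>
      (\<forall>x y. ((), (\<omega> - x, y)) \<in> \<beta> \<longleftrightarrow> x = y) \<and> (\<forall>x y. ((), (y, \<omega> - x)) \<in> \<beta> \<longleftrightarrow> x = y)"
    unfolding nondeg_witness_def left_snake right_snake by (auto simp: ridt_def)
  also have "\<dots> \<longleftrightarrow> (\<forall>a b. ((), (a, b)) \<in> \<beta> \<longleftrightarrow> a + b = \<omega>)"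
  proof
    assume "(\<forall>x y. ((), (\<omega> - x, y)) \<in> \<beta> \<longleftrightarrow> x = y) \<and> (\<forall>x y. ((), (y, \<omega> - x)) \<in> \<beta> \<longleftrightarrow> x = y)"
    then have "((), (\<omega> - (\<omega> - a), b)) \<in> \<beta> \<longleftrightarrow> \<omega> - a = b" for a b
      by blast
    then show "\<forall>a b. ((), (a, b)) \<in> \<beta> \<longleftrightarrow> a + b = \<omega>"
      by (auto simp: algebra_simps)
  qed (auto simp: algebra_simps)
  also have "\<dots> \<longleftrightarrow> \<beta> = {((), (a, b)) | a b. a + b = \<omega>}"
    by auto
  finally show ?thesis .
qed

lemma copairing_add_rel:
  fixes \<omega> :: "'a::ab_group_add"
  shows "copairing {(\<omega>, ())} add_rel = {((), (a, b)) | a b. a + b = \<omega>}"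
  unfolding copairing_def nondeg_witness_add_rel_iff by simp

lemma comult_add_rel:
  fixes \<omega> :: "'a::ab_group_add"
  shows "comult {(\<omega>, ())} add_rel = {(x, (a, c)) | x a c. a + c = x + \<omega>}"
proof -
  have exists_split_iff: "(\<exists>b. a + b = \<omega> \<and> c = b + x) \<longleftrightarrow> a + c = x + \<omega>" for x a c
  proof
    assume "a + c = x + \<omega>"
    then show "\<exists>b. a + b = \<omega> \<and> c = b + x"
      by (intro exI[of _ "\<omega> - a"]) (auto simp: algebra_simps)
  qed (auto simp: algebra_simps)
  have "comult {(\<omega>, ())} add_rel = {(x, (a, c)) | x a c. \<exists>b. a + b = \<omega> \<and> c = b + x}"
    unfolding comult_def copairing_add_rel
    unfolding add_rel_def rcomp_def rtens_def ridt_def assoc_R_def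
      lunit_inv_R_def
    by auto
  also have "\<dots> = {(x, (a, c)) | x a c. a + c = x + \<omega>}"
    by (simp only: exists_split_iff)
  finally show ?thesis .
qed

lemma add_rel_comp_comult:
  fixes \<omega> :: "'a::ab_group_add"
  shows "add_rel \<circ>\<^sub>R comult {(\<omega>, ())} add_rel = translation_rel \<omega>"
  unfolding comult_add_rel
  unfolding add_rel_def translation_rel_def rcomp_def by auto

lemma relpow_translation_rel:
  fixes c :: "'a::comm_monoid_add"
  shows "translation_rel c ^^ n = translation_rel (\<Sum>i<n. c)"
proof (induction n)
  case 0
  show ?case by (auto simp: translation_rel_def)
next
  case (Suc n)
  show ?case
    unfolding relpow.simps Suc by (auto simp: translation_rel_def add.assoc)
qed

lemma frobenius_rel_add_rel:
  fixes \<omega> :: "'a::ab_group_add"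
  shows "frobenius_rel {((), 0)} {(\<omega>, ())} add_rel"
  unfolding frobenius_rel_def nondeg_witness_add_rel_iff
  using add_rel_unit_laws add_rel_assoc by auto

lemma partition_fn_add_rel:
  fixes \<omega> :: "'a::ab_group_add"
  shows "partition_fn {((), 0)} {(\<omega>, ())} add_rel g \<longleftrightarrow> (\<Sum>i<g. \<omega>) = \<omega>"
  unfolding partition_fn_def add_rel_comp_comult relpow_translation_rel
  by (auto simp: translation_rel_def rcomp_def)

lemma int_smul_of_nat_minus_one_eq_0_iff:
  fixes \<omega> :: "'a::ab_group_add"
  shows "int_smul (int g - 1) \<omega> = 0 \<longleftrightarrow> (\<Sum>i<g. \<omega>) = \<omega>"
  by (cases g) (auto simp: int_smul_def)

theorem proposition4p1:
  fixes \<omega> :: "'a::{ab_group_add, finite}"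
  defines "\<eta> \<equiv> {((), 0)}"
      and "\<epsilon> \<equiv> {(\<omega>, ())}"
      and "\<mu> \<equiv> {((x, y), x + y) | x y. True}"
  shows "frobenius_rel \<eta> \<epsilon> \<mu> \<and> commutative_rel \<mu> \<and>
         (\<forall>g::nat. partition_fn \<eta> \<epsilon> \<mu> g \<longleftrightarrow> int_smul (int g - 1) \<omega> = 0)"
proof -
  have "\<mu> = add_rel"
    unfolding \<mu>_def add_rel_def ..
  then show ?thesis
    unfolding \<eta>_def \<epsilon>_def
    by (simp add: frobenius_rel_add_rel commutative_rel_add_rel partition_fn_add_rel
        int_smul_of_nat_minus_one_eq_0_iff)
qed

end
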